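(* Let $(\Omega,\mathcal{F},\mathbb{P})$ be a probability space, let $X_{n,m}\colon\Omega\to[0,1]$, $n,m\in\mathbb{N}$, be i.i.d. random variables that are continuous uniformly distributed on $[0,1]$, let $f\colon\mathbb{R}^2\to\mathbb{R}$ be given by $f(\theta)=\int_0^1|\theta_2\max(\theta_1x,0)-\sin(x)|^2\,dx$ for $\theta=(\theta_1,\theta_2)\in\mathbb{R}^2$, let $F\colon\mathbb{R}^2\times[0,1]\to\mathbb{R}$ be given by $F(\theta,x)=|\theta_2\max(\theta_1x,0)-\sin(x)|^2$, and let $\mathcal{M}=\{\theta\in\mathbb{R}^2\colon f(\theta)=\inf_{\vartheta\in\mathbb{R}^2}f(\vartheta)\}$. Then: $f(\theta)=\mathbb{E}[F(\theta,X_{1,1})]$ and $\mathbb{E}[|F(\theta,X_{1,1})|^2]<\infty$ for every $\theta\in\mathbb{R}^2$; for every $x\in[0,1]$ the map $\theta\mapsto F(\theta,x)$ is locally Lipschitz continuous; and there exists an open set $U\subseteq\mathbb{R}^2$ such that $f|_U$ is three times continuously differentiable, for every non-empty compact $\mathfrak{C}\subseteq U$ it holds that $\sup_{\theta\in\mathfrak{C}}\mathbb{E}[|F(\theta,X_{1,1})|^2+|(\nabla_\theta F)(\theta,X_{1,1})|^2]<\infty$, $\mathcal{M}\cap U$ is a non-empty $1$-dimensional $C^1$-submanifold of $\mathbb{R}^2$, and $\operatorname{rank}((\operatorname{Hess}f)(\theta))=1$ for every $\theta\in\mathcal{M}\cap U$.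
   Context: $\nabla_\theta F$ denotes the gradient of $F$ with respect to $\theta$. *)

theory Defs
  imports "HOL-Analysis.Analysis" "HOL-Probability.Probability"
begin

definition grad :: "(real^'n \<Rightarrow> real) \<Rightarrow> real^'n \<Rightarrow> real^'n" where
  "grad f x = (\<chi> i. frechet_derivative f (at x) (axis i 1))"

definition hessian :: "(real^'n \<Rightarrow> real) \<Rightarrow> real^'n \<Rightarrow> real^'n^'n" where
  "hessian f x = jacobian (grad f) (at x)"

fun Ck_on :: "nat \<Rightarrow> (real^'n) set \<Rightarrow> (real^'n \<Rightarrow> real) \<Rightarrow> bool" where
  "Ck_on 0 U f = continuous_on U f"
| "Ck_on (Suc k) U f =
     (\<exists>g. (\<forall>x\<in>U. (f has_derivative (\<lambda>h. g x \<bullet> h)) (at x)) \<and>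
          (\<forall>i. Ck_on k U (\<lambda>x. g x $ i)))"

definition C1_submanifold :: "nat \<Rightarrow> (real^'n) set \<Rightarrow> bool" where
  "C1_submanifold d S \<longleftrightarrow> d \<le> CARD('n) \<and>
     (\<forall>p\<in>S. \<exists>V \<phi>. open V \<and> p \<in> V \<and>
        (\<forall>j < CARD('n) - d. Ck_on 1 V (\<phi> j)) \<and>
        S \<inter> V = {x\<in>V. \<forall>j < CARD('n) - d. \<phi> j x = 0} \<and>
        (\<forall>x\<in>S \<inter> V. inj_on (\<lambda>j. grad (\<phi> j) x) {..<CARD('n) - d} \<and>
                     independent ((\<lambda>j. grad (\<phi> j) x) ` {..<CARD('n) - d})))"

end

theory Submission
  imports Defs
begin

text \<open>On \<open>[0,1]\<close> the network computes \<open>x \<mapsto> a x\<close> with \<open>a = \<theta>\<^sub>2 max(\<theta>\<^sub>1, 0)\<close>,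
  so \<open>f(\<theta>) = (a - 3\<kappa>)\<^sup>2/3 + min f\<close> with \<open>\<kappa> = \<integral>\<^sub>0\<^sup>1 x sin x dx\<close>, and the minimisers are
  exactly the \<open>\<theta>\<close> with \<open>a = 3\<kappa>\<close>. On the half-plane \<open>U = {\<theta>\<^sub>1 > 0}\<close> we have
  \<open>a = \<theta>\<^sub>1\<theta>\<^sub>2\<close>, so \<open>f\<close> is a polynomial there, \<open>\<M> \<inter> U\<close> is the regular level set
  \<open>\<theta>\<^sub>1\<theta>\<^sub>2 = 3\<kappa>\<close> (the gradient of \<open>\<theta>\<^sub>1\<theta>\<^sub>2\<close> is \<open>(\<theta>\<^sub>2, \<theta>\<^sub>1) \<noteq> 0\<close>),
  and since \<open>f = q(\<theta>\<^sub>1\<theta>\<^sub>2)\<close> with \<open>q'(3\<kappa>) = 0\<close>, the Hessian at a minimiser is the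
  rank-one matrix \<open>q''(3\<kappa>) (\<theta>\<^sub>2, \<theta>\<^sub>1)(\<theta>\<^sub>2, \<theta>\<^sub>1)\<^sup>T\<close>. The moment and Lipschitz bounds
  all come from \<open>|\<theta>\<^sub>2 max(\<theta>\<^sub>1 x, 0)| \<le> |\<theta>|\<^sup>2\<close> for \<open>|x| \<le> 1\<close>.\<close>

lemma linear_cart_real_eq_inner:
  fixes f :: "real^'n \<Rightarrow> real"
  assumes "linear f"
  shows "f h = (\<chi> i. f (axis i 1)) \<bullet> h"
proof -
  have "f h = f (\<Sum>i\<in>UNIV. h $ i *\<^sub>R axis i 1)"
    using basis_expansion[of h] by (simp add: scalar_mult_eq_scaleR)
  also have "\<dots> = (\<Sum>i\<in>UNIV. h $ i * f (axis i 1))"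
    using assms by (simp add: linear_sum linear_scale)
  finally show ?thesis by (simp add: inner_vec_def mult.commute)
qed

lemma real_polynomial_function_has_gradient:
  fixes f :: "real^'n \<Rightarrow> real"
  assumes "real_polynomial_function f"
  shows "\<exists>g. (\<forall>x. (f has_derivative (\<lambda>h. g x \<bullet> h)) (at x)) \<and>
             (\<forall>i. real_polynomial_function (\<lambda>x. g x $ i))"
  using assms
proof (induction rule: real_polynomial_function.induct)
  case (linear f)
  then have "f = (\<lambda>h. (\<chi> i. f (axis i 1)) \<bullet> h)"
    using linear_cart_real_eq_inner[OF bounded_linear.linear] by blast
  with linear have "(f has_derivative (\<lambda>h. (\<chi> i. f (axis i 1)) \<bullet> h)) (at x)" for x
    by (metis bounded_linear_imp_has_derivative)
  then show ?case
    by (intro exI[of _ "\<lambda>_. \<chi> i. f (axis i 1)"]) auto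
next
  case (const c)
  show ?case by (intro exI[of _ "\<lambda>_. 0"]) auto
next
  case (add f g)
  then obtain df dg where
    "\<And>x. (f has_derivative (\<lambda>h. df x \<bullet> h)) (at x)" "\<And>i. real_polynomial_function (\<lambda>x. df x $ i)"
    "\<And>x. (g has_derivative (\<lambda>h. dg x \<bullet> h)) (at x)" "\<And>i. real_polynomial_function (\<lambda>x. dg x $ i)"
    by blast
  then show ?case
    by (intro exI[of _ "\<lambda>x. df x + dg x"])
       (auto intro: has_derivative_add[THEN has_derivative_eq_rhs] simp: inner_add_left)
next
  case (mult f g)
  then obtain df dg where
    "\<And>x. (f has_derivative (\<lambda>h. df x \<bullet> h)) (at x)" "\<And>i. real_polynomial_function (\<lambda>x. df x $ i)"
    "\<And>x. (g has_derivative (\<lambda>h. dg x \<bullet> h)) (at x)" "\<And>i. real_polynomial_function (\<lambda>x. dg x $ i)"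
    by blast
  with mult.hyps show ?case
    by (intro exI[of _ "\<lambda>x. f x *\<^sub>R dg x + g x *\<^sub>R df x"])
       (auto intro!: has_derivative_mult[THEN has_derivative_eq_rhs] real_polynomial_function.intros(3,4)
         simp: inner_add_left)
qed

lemma real_polynomial_function_Ck_on:
  fixes f :: "real^'n \<Rightarrow> real"
  assumes "real_polynomial_function f"
  shows "Ck_on k U f"
  using assms
proof (induction k arbitrary: f)
  case 0
  then show ?case
    by (simp add: continuous_on_polymonial_function real_polynomial_function_eq)
next
  case (Suc k)
  then show ?case
    using real_polynomial_function_has_gradient by (metis Ck_on.simps(2))
qed

lemma Ck_on_cong:
  assumes "open U" "\<And>x. x \<in> U \<Longrightarrow> f x = g x" "Ck_on k U f"
  shows "Ck_on k U g"
proof (cases k)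
  case 0
  then show ?thesis using assms continuous_on_cong by auto
next
  case (Suc k')
  with assms obtain d where "\<forall>x\<in>U. (f has_derivative (\<lambda>h. d x \<bullet> h)) (at x)"
    and "\<forall>i. Ck_on k' U (\<lambda>x. d x $ i)"
    by auto
  with Suc assms(1,2) show ?thesis
    by (auto intro: has_derivative_transform_within_open)
qed

lemma grad_eqI:
  assumes "(f has_derivative (\<lambda>h. g \<bullet> h)) (at x)"
  shows "grad f x = g"
  using frechet_derivative_at[OF assms, symmetric] by (simp add: grad_def vec_eq_iff inner_axis)

lemma rank_outer_product:
  fixes v w :: "real^'n"
  assumes "v \<noteq> 0" "w \<noteq> 0"
  shows "rank (matrix (\<lambda>h. (v \<bullet> h) *\<^sub>R w)) = 1"
proof -
  let ?A = "matrix (\<lambda>h. (v \<bullet> h) *\<^sub>R w)"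
  have row: "row i ?A = w $ i *\<^sub>R v" for i
    by (simp add: row_def matrix_def vec_eq_iff inner_axis' inner_axis mult.commute)
  have "rows ?A \<subseteq> span {v}"
    by (auto simp: rows_def row span_base span_scale)
  then have "dim (rows ?A) \<le> 1"
    using dim_le_card[of "rows ?A" "{v}"] by simp
  moreover obtain i where "w $ i \<noteq> 0"
    using assms(2) by (auto simp: vec_eq_iff)
  then have "\<not> rows ?A \<subseteq> {0}"
    using assms(1) by (auto simp: rows_def row)
  then have "dim (rows ?A) \<noteq> 0"
    by simp
  ultimately show ?thesis
    unfolding row_rank_def by linarith
qed

lemma C1_submanifold_zero_set:
  fixes \<phi> :: "real^'n \<Rightarrow> real"
  assumes "open V" "Ck_on 1 V \<phi>" "\<And>x. x \<in> V \<Longrightarrow> \<phi> x = 0 \<Longrightarrow> grad \<phi> x \<noteq> 0"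
  shows "C1_submanifold (CARD('n) - 1) {x \<in> V. \<phi> x = 0}"
proof -
  have codim: "CARD('n) - (CARD('n) - 1) = 1"
    using zero_less_card_finite[where 'a='n] by linarith
  show ?thesis
    unfolding C1_submanifold_def codim
    by (intro conjI ballI exI[of _ V] exI[of _ "\<lambda>_. \<phi>"])
       (use assms in \<open>auto simp: lessThan_Suc independent_insert\<close>)
qed

lemma lipschitz_on_mult_real:
  fixes f g :: "'a::metric_space \<Rightarrow> real"
  assumes "Lf-lipschitz_on S f" "Lg-lipschitz_on S g"
    and "\<And>x. x \<in> S \<Longrightarrow> \<bar>f x\<bar> \<le> Bf" "\<And>x. x \<in> S \<Longrightarrow> \<bar>g x\<bar> \<le> Bg" "0 \<le> Bf" "0 \<le> Bg"
  shows "(Bf * Lg + Bg * Lf)-lipschitz_on S (\<lambda>x. f x * g x)"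
proof (rule lipschitz_onI)
  fix x y assume xy: "x \<in> S" "y \<in> S"
  have "\<bar>f x * g x - f y * g y\<bar> = \<bar>f x * (g x - g y) + g y * (f x - f y)\<bar>"
    by (simp add: algebra_simps)
  also have "\<dots> \<le> \<bar>f x\<bar> * \<bar>g x - g y\<bar> + \<bar>g y\<bar> * \<bar>f x - f y\<bar>"
    by (metis abs_mult abs_triangle_ineq)
  also have "\<dots> \<le> Bf * (Lg * dist x y) + Bg * (Lf * dist x y)"
    using assms xy lipschitz_onD[OF assms(1) xy] lipschitz_onD[OF assms(2) xy]
    by (intro add_mono mult_mono) (auto simp: dist_real_def)
  finally show "dist (f x * g x) (f y * g y) \<le> (Bf * Lg + Bg * Lf) * dist x y"
    by (simp add: dist_real_def algebra_simps)
next
  show "0 \<le> Bf * Lg + Bg * Lf"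
    using assms lipschitz_on_nonneg by (metis add_nonneg_nonneg mult_nonneg_nonneg)
qed

lemma (in prob_space) nn_integral_le_const:
  assumes "\<And>\<omega>. \<omega> \<in> space M \<Longrightarrow> g \<omega> \<le> K"
  shows "(\<integral>\<^sup>+\<omega>. ennreal (g \<omega>) \<partial>M) \<le> ennreal K"
proof -
  have "(\<integral>\<^sup>+\<omega>. ennreal (g \<omega>) \<partial>M) \<le> (\<integral>\<^sup>+\<omega>. ennreal K \<partial>M)"
    using assms by (intro nn_integral_mono ennreal_leI)
  then show ?thesis
    by (simp add: emeasure_space_1)
qed

lemma integral_uniform_distributed:
  fixes g :: "real \<Rightarrow> real"
  assumes "distributed M lborel X (\<lambda>x. indicator {0..1::real} x)" "continuous_on UNIV g"
  shows "(\<integral>\<omega>. g (X \<omega>) \<partial>M) = integral {0..1} g"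
proof -
  have "distributed M lborel X (\<lambda>x. ennreal (indicator {0..1::real} x))"
    using assms(1) by (simp add: ennreal_indicator)
  moreover have "g \<in> borel_measurable lborel"
    using assms(2) by (simp add: borel_measurable_continuous_onI)
  ultimately have "(\<integral>\<omega>. g (X \<omega>) \<partial>M) = (LINT x:{0..1}|lborel. g x)"
    using distributed_integral[of M lborel X "indicator {0..1}" g]
    by (simp add: set_lebesgue_integral_def)
  also have "\<dots> = integral {0..1} g"
    using assms(2)
    by (intro set_borel_integral_eq_integral(2) borel_integrable_atLeastAtMost')
       (auto intro: continuous_on_subset)
  finally show ?thesis .
qed

definition swap2 :: "real^2 \<Rightarrow> real^2" where
  "swap2 v = vector [v$2, v$1]"

lemma swap2_nth [simp]: "swap2 v $ 1 = v $ 2" "swap2 v $ 2 = v $ 1"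
  by (simp_all add: swap2_def)

lemma inner_swap2: "swap2 v \<bullet> h = v$2 * h$1 + v$1 * h$2"
  by (simp add: inner_vec_def sum_2)

lemma norm_swap2 [simp]: "norm (swap2 v) = norm v"
  by (simp add: norm_eq_sqrt_inner inner_vec_def sum_2 add.commute)

lemma swap2_eq_0_iff [simp]: "swap2 v = 0 \<longleftrightarrow> v = 0"
  by (auto simp: vec_eq_iff forall_2)

lemma bounded_linear_swap2: "bounded_linear swap2"
proof -
  have "linear swap2"
    by (rule linearI) (simp_all add: vec_eq_iff forall_2)
  then show ?thesis
    by (rule linear_conv_bounded_linear[THEN iffD1])
qed

lemma has_derivative_swap2: "(swap2 has_derivative swap2) F"
  by (rule bounded_linear_imp_has_derivative[OF bounded_linear_swap2])

lemma has_derivative_comp_coord_prod: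
  assumes "(q has_real_derivative d) (at (v$1 * v$2))"
  shows "((\<lambda>v::real^2. q (v$1 * v$2)) has_derivative (\<lambda>h. (d *\<^sub>R swap2 v) \<bullet> h)) (at v)"
proof -
  have "((\<lambda>v::real^2. v$1 * v$2) has_derivative (\<lambda>h. swap2 v \<bullet> h)) (at v)"
    by (auto intro!: derivative_eq_intros bounded_linear_imp_has_derivative bounded_linear_vec_nth
             simp: inner_swap2 algebra_simps)
  from has_derivative_compose[OF this assms[unfolded has_field_derivative_def]] show ?thesis
    by (simp add: algebra_simps)
qed

definition relu_net :: "real^2 \<Rightarrow> real \<Rightarrow> real" where
  "relu_net \<theta> x = \<theta>$2 * max (\<theta>$1 * x) 0"

definition sq_loss :: "real^2 \<Rightarrow> real \<Rightarrow> real" where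
  "sq_loss \<theta> x = \<bar>relu_net \<theta> x - sin x\<bar>^2"

definition risk :: "real^2 \<Rightarrow> real" where
  "risk \<theta> = integral {0..1} (sq_loss \<theta>)"

definition x_sin_integral :: real where
  "x_sin_integral = sin 1 - cos 1"

text \<open>\<open>(1 - sin 1 cos 1) / 2\<close> is \<open>\<integral>\<^sub>0\<^sup>1 sin\<^sup>2 x dx\<close>.\<close>

definition min_risk :: real where
  "min_risk = (1 - sin 1 * cos 1) / 2 - 3 * x_sin_integral^2"

lemma has_integral_linear_minus_sin_sq:
  "((\<lambda>x. (a * x - sin x)^2) has_integral (a - 3 * x_sin_integral)^2 / 3 + min_risk) {0..1}"
proof -
  define \<Phi> where "\<Phi> x = a^2 * x^3 / 3 - 2 * a * (sin x - x * cos x) + (x - sin x * cos x) / 2"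
    for x :: real
  have "(\<Phi> has_real_derivative (a * x - sin x)^2) (at x)" for x
  proof -
    have cos_sq: "cos x * cos x = 1 - sin x * sin x"
      using sin_cos_squared_add[of x] by (simp add: power2_eq_square)
    show ?thesis
      unfolding \<Phi>_def
      by (rule derivative_eq_intros refl | simp)+ (simp add: power2_eq_square algebra_simps cos_sq)
  qed
  then have "((\<lambda>x. (a * x - sin x)^2) has_integral (\<Phi> 1 - \<Phi> 0)) {0..1}"
    by (intro fundamental_theorem_of_calculus)
       (auto intro: DERIV_subset simp: has_real_derivative_iff_has_vector_derivative[symmetric])
  moreover have "\<Phi> 1 - \<Phi> 0 = (a - 3 * x_sin_integral)^2 / 3 + min_risk"
    by (simp add: \<Phi>_def min_risk_def x_sin_integral_def power2_diff sin_squared_eq field_simps)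
       (simp add: power2_eq_square algebra_simps)
  ultimately show ?thesis
    by simp
qed

lemma relu_net_homogeneous: "0 \<le> x \<Longrightarrow> relu_net \<theta> x = relu_net \<theta> 1 * x"
  by (cases "0 \<le> \<theta>$1") (auto simp: relu_net_def max_def mult_nonneg_nonneg mult_le_0_iff)

lemma relu_net_half_plane:
  assumes "0 < \<theta>$1" "0 \<le> x"
  shows "relu_net \<theta> x = x * (\<theta>$1 * \<theta>$2)"
proof -
  have "max (\<theta>$1 * x) 0 = \<theta>$1 * x"
    using assms by (simp add: max_absorb1)
  then show ?thesis
    by (simp add: relu_net_def)
qed

lemma risk_eq: "risk \<theta> = (relu_net \<theta> 1 - 3 * x_sin_integral)^2 / 3 + min_risk"
proof -
  have "risk \<theta> = integral {0..1} (\<lambda>x. (relu_net \<theta> 1 * x - sin x)^2)"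
    unfolding risk_def sq_loss_def
  proof (intro integral_cong)
    fix x :: real
    assume "x \<in> {0..1}"
    then show "\<bar>relu_net \<theta> x - sin x\<bar>^2 = (relu_net \<theta> 1 * x - sin x)^2"
      using relu_net_homogeneous[of x \<theta>] by simp
  qed
  then show ?thesis
    using has_integral_linear_minus_sin_sq by (simp add: integral_unique)
qed

lemma INF_risk: "(INF \<theta>. risk \<theta>) = min_risk"
proof (rule antisym)
  have "relu_net (vector [1, 3 * x_sin_integral]) 1 = 3 * x_sin_integral"
    by (simp add: relu_net_def)
  then have "risk (vector [1, 3 * x_sin_integral]) = min_risk"
    by (simp add: risk_eq)
  moreover have "bdd_below (range risk)"
    by (rule bdd_belowI2[of _ min_risk]) (simp add: risk_eq)
  ultimately show "(INF \<theta>. risk \<theta>) \<le> min_risk"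
    using cINF_lower[of risk UNIV "vector [1, 3 * x_sin_integral]"] by simp
  show "min_risk \<le> (INF \<theta>. risk \<theta>)"
    by (rule cINF_greatest) (auto simp: risk_eq)
qed

lemma risk_eq_INF_iff: "risk \<theta> = (INF v. risk v) \<longleftrightarrow> relu_net \<theta> 1 = 3 * x_sin_integral"
  unfolding INF_risk by (simp add: risk_eq)

lemma open_half_plane: "open {\<theta>::real^2. 0 < \<theta>$1}"
  by (simp add: open_halfspace_component_gt_cart)

lemma sq_loss_half_plane:
  "0 < \<theta>$1 \<Longrightarrow> 0 \<le> x \<Longrightarrow> sq_loss \<theta> x = (x * (\<theta>$1 * \<theta>$2) - sin x)^2"
  by (simp add: sq_loss_def relu_net_half_plane)

lemma risk_half_plane:
  "0 < \<theta>$1 \<Longrightarrow> risk \<theta> = (\<theta>$1 * \<theta>$2 - 3 * x_sin_integral)^2 / 3 + min_risk"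
  by (simp add: risk_eq relu_net_half_plane)

lemma Ck_on_risk_half_plane: "Ck_on k {\<theta>::real^2. 0 < \<theta>$1} risk"
proof (rule Ck_on_cong[OF open_half_plane])
  show "Ck_on k {\<theta>. 0 < \<theta>$1} (\<lambda>\<theta>. (\<theta>$1 * \<theta>$2 - 3 * x_sin_integral)^2 / 3 + min_risk)"
    by (intro real_polynomial_function_Ck_on real_polynomial_function_divide
              real_polynomial_function_power real_polynomial_function_diff
              real_polynomial_function.intros(2-4) real_polynomial_function.intros(1)
              bounded_linear_vec_nth)
qed (simp add: risk_half_plane)

lemma grad_sq_loss_half_plane:
  assumes "0 < \<theta>$1" "0 \<le> x"
  shows "grad (\<lambda>v. sq_loss v x) \<theta> = (2 * x * (relu_net \<theta> x - sin x)) *\<^sub>R swap2 \<theta>"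
proof (rule grad_eqI)
  have "((\<lambda>v::real^2. (x * (v$1 * v$2) - sin x)^2) has_derivative
          (\<lambda>h. ((2 * x * (relu_net \<theta> x - sin x)) *\<^sub>R swap2 \<theta>) \<bullet> h)) (at \<theta>)"
    by (rule has_derivative_comp_coord_prod[where q = "\<lambda>s. (x * s - sin x)^2"])
       (auto intro!: derivative_eq_intros simp: assms relu_net_half_plane algebra_simps)
  then show "((\<lambda>v. sq_loss v x) has_derivative
          (\<lambda>h. ((2 * x * (relu_net \<theta> x - sin x)) *\<^sub>R swap2 \<theta>) \<bullet> h)) (at \<theta>)"
    by (rule has_derivative_transform_within_open[OF _ open_half_plane])
       (use assms in \<open>auto simp: sq_loss_half_plane relu_net_half_plane\<close>)
qed

lemma grad_risk_half_plane:
  assumes "0 < \<theta>$1"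
  shows "grad risk \<theta> = (2 / 3 * (\<theta>$1 * \<theta>$2 - 3 * x_sin_integral)) *\<^sub>R swap2 \<theta>"
proof (rule grad_eqI)
  have "((\<lambda>v::real^2. (v$1 * v$2 - 3 * x_sin_integral)^2 / 3 + min_risk) has_derivative
          (\<lambda>h. ((2 / 3 * (\<theta>$1 * \<theta>$2 - 3 * x_sin_integral)) *\<^sub>R swap2 \<theta>) \<bullet> h)) (at \<theta>)"
    by (rule has_derivative_comp_coord_prod[where q = "\<lambda>s. (s - 3 * x_sin_integral)^2 / 3 + min_risk"])
       (auto intro!: derivative_eq_intros)
  then show "(risk has_derivative
          (\<lambda>h. ((2 / 3 * (\<theta>$1 * \<theta>$2 - 3 * x_sin_integral)) *\<^sub>R swap2 \<theta>) \<bullet> h)) (at \<theta>)"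
    by (rule has_derivative_transform_within_open[OF _ open_half_plane])
       (use assms in \<open>auto simp: risk_half_plane\<close>)
qed

lemma hessian_risk_half_plane:
  assumes "0 < \<theta>$1" "\<theta>$1 * \<theta>$2 = 3 * x_sin_integral"
  shows "hessian risk \<theta> = matrix (\<lambda>h. (swap2 \<theta> \<bullet> h) *\<^sub>R ((2 / 3) *\<^sub>R swap2 \<theta>))"
proof -
  have scalar: "((\<lambda>v::real^2. 2 / 3 * (v$1 * v$2 - 3 * x_sin_integral)) has_derivative
          (\<lambda>h. ((2 / 3) *\<^sub>R swap2 \<theta>) \<bullet> h)) (at \<theta>)"
    by (rule has_derivative_comp_coord_prod[where q = "\<lambda>s. 2 / 3 * (s - 3 * x_sin_integral)"])
       (auto intro!: derivative_eq_intros)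
  have "((\<lambda>v. (2 / 3 * (v$1 * v$2 - 3 * x_sin_integral)) *\<^sub>R swap2 v) has_derivative
          (\<lambda>h. (swap2 \<theta> \<bullet> h) *\<^sub>R ((2 / 3) *\<^sub>R swap2 \<theta>))) (at \<theta>)"
    using has_derivative_scaleR[OF scalar has_derivative_swap2]
    by (rule has_derivative_eq_rhs) (simp add: assms(2) fun_eq_iff mult.commute)
  then have "(grad risk has_derivative (\<lambda>h. (swap2 \<theta> \<bullet> h) *\<^sub>R ((2 / 3) *\<^sub>R swap2 \<theta>))) (at \<theta>)"
    by (rule has_derivative_transform_within_open[OF _ open_half_plane])
       (use assms(1) in \<open>auto simp: grad_risk_half_plane\<close>)
  then show ?thesis
    by (simp add: hessian_def jacobian_def frechet_derivative_at[symmetric])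
qed

lemma abs_hidden_unit_le: "\<bar>x\<bar> \<le> 1 \<Longrightarrow> \<bar>max (\<theta>$1 * x) 0\<bar> \<le> norm \<theta>"
proof -
  assume x: "\<bar>x\<bar> \<le> 1"
  have "\<bar>max (\<theta>$1 * x) 0\<bar> \<le> \<bar>\<theta>$1 * x\<bar>"
    by (simp add: max_def)
  also have "\<dots> \<le> \<bar>\<theta>$1\<bar>"
    using x by (simp add: abs_mult mult_left_le)
  also have "\<dots> \<le> norm \<theta>"
    by (rule component_le_norm_cart)
  finally show ?thesis .
qed

lemma abs_relu_net_le:
  assumes "\<bar>x\<bar> \<le> 1" "norm \<theta> \<le> B"
  shows "\<bar>relu_net \<theta> x\<bar> \<le> B^2"
proof -
  have "\<bar>\<theta>$2\<bar> * \<bar>max (\<theta>$1 * x) 0\<bar> \<le> B * B"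
    using assms abs_hidden_unit_le[OF assms(1), of \<theta>] component_le_norm_cart[of \<theta> 2]
    by (intro mult_mono) auto
  then show ?thesis
    by (simp add: relu_net_def abs_mult power2_eq_square)
qed

lemma abs_relu_net_minus_sin_le:
  "\<bar>x\<bar> \<le> 1 \<Longrightarrow> norm \<theta> \<le> B \<Longrightarrow> \<bar>relu_net \<theta> x - sin x\<bar> \<le> B^2 + 1"
  using abs_relu_net_le[of x \<theta> B] abs_sin_le_one[of x] by linarith

lemma sq_loss_le:
  "\<bar>x\<bar> \<le> 1 \<Longrightarrow> norm \<theta> \<le> B \<Longrightarrow> sq_loss \<theta> x \<le> (B^2 + 1)^2"
  unfolding sq_loss_def by (intro power_mono abs_relu_net_minus_sin_le) auto

lemma sq_loss_grad_le:
  assumes "0 < \<theta>$1" "0 \<le> x" "x \<le> 1" "norm \<theta> \<le> B"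
  shows "\<bar>sq_loss \<theta> x\<bar>^2 + norm (grad (\<lambda>v. sq_loss v x) \<theta>)^2
           \<le> ((B^2 + 1)^2)^2 + (2 * (B^2 + 1) * B)^2"
proof -
  have residual: "\<bar>relu_net \<theta> x - sin x\<bar> \<le> B^2 + 1"
    using assms by (intro abs_relu_net_minus_sin_le) auto
  have "\<bar>sq_loss \<theta> x\<bar> \<le> (B^2 + 1)^2"
    using assms sq_loss_le[of x \<theta> B] by (simp add: sq_loss_def)
  then have loss: "\<bar>sq_loss \<theta> x\<bar>^2 \<le> ((B^2 + 1)^2)^2"
    by (intro power_mono) auto
  have "norm (grad (\<lambda>v. sq_loss v x) \<theta>) = 2 * x * \<bar>relu_net \<theta> x - sin x\<bar> * norm \<theta>"
    using assms by (simp add: grad_sq_loss_half_plane abs_mult)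
  also have "\<dots> \<le> 2 * 1 * (B^2 + 1) * B"
    using assms residual by (intro mult_mono) auto
  finally have "norm (grad (\<lambda>v. sq_loss v x) \<theta>)^2 \<le> (2 * (B^2 + 1) * B)^2"
    by (intro power_mono) auto
  with loss show ?thesis
    by linarith
qed

lemma lipschitz_on_vec_nth: "1-lipschitz_on S (\<lambda>v. v$i)"
  by (rule lipschitz_onI) (simp_all add: dist_vec_nth_le)

lemma lipschitz_on_relu_net:
  assumes "\<bar>x\<bar> \<le> 1" "\<And>v. v \<in> S \<Longrightarrow> norm v \<le> B" "0 \<le> B"
  shows "(2 * B)-lipschitz_on S (\<lambda>v. relu_net v x)"
proof -
  have "1-lipschitz_on S (\<lambda>v. max (v$1 * x) 0)"
  proof (rule lipschitz_onI)
    fix u v assume "u \<in> S" "v \<in> S"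
    have "dist (max (u$1 * x) 0) (max (v$1 * x) 0) \<le> \<bar>u$1 - v$1\<bar> * \<bar>x\<bar>"
      by (simp add: dist_real_def max_def abs_mult[symmetric] left_diff_distrib)
    also have "\<dots> \<le> dist u v"
      using assms(1) dist_vec_nth_le[of u 1 v]
      by (metis abs_ge_zero dist_real_def mult_left_le order_trans)
    finally show "dist (max (u$1 * x) 0) (max (v$1 * x) 0) \<le> 1 * dist u v"
      by simp
  qed simp
  moreover have "\<bar>max (v$1 * x) 0\<bar> \<le> B" "\<bar>v$2\<bar> \<le> B" if "v \<in> S" for v
    using abs_hidden_unit_le[OF assms(1), of v] component_le_norm_cart[of v 2] assms(2)[OF that]
    by linarith+
  ultimately have "(B * 1 + B * 1)-lipschitz_on S (\<lambda>v. v$2 * max (v$1 * x) 0)"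
    using assms(3) by (intro lipschitz_on_mult_real lipschitz_on_vec_nth)
  then show ?thesis
    by (simp add: relu_net_def)
qed

lemma bounded_imp_lipschitz_on_sq_loss:
  assumes "bounded S" "\<bar>x\<bar> \<le> 1"
  shows "\<exists>L. L-lipschitz_on S (\<lambda>v. sq_loss v x)"
proof -
  obtain B where B: "0 < B" "\<And>v. v \<in> S \<Longrightarrow> norm v \<le> B"
    using assms(1) bounded_pos by blast
  have "(2 * B + 0)-lipschitz_on S (\<lambda>v. relu_net v x - sin x)"
    using assms(2) B by (intro lipschitz_on_diff lipschitz_on_relu_net lipschitz_on_constant) auto
  moreover have "\<bar>relu_net v x - sin x\<bar> \<le> B^2 + 1" if "v \<in> S" for v
    using assms(2) B(2)[OF that] by (rule abs_relu_net_minus_sin_le)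
  ultimately have "((B^2 + 1) * (2 * B + 0) + (B^2 + 1) * (2 * B + 0))-lipschitz_on S
                     (\<lambda>v. (relu_net v x - sin x) * (relu_net v x - sin x))"
    by (intro lipschitz_on_mult_real) auto
  then show ?thesis
    by (auto simp: sq_loss_def power2_eq_square)
qed

lemma continuous_on_sq_loss: "continuous_on UNIV (sq_loss \<theta>)"
  unfolding sq_loss_def relu_net_def by (intro continuous_intros)

lemma (in prob_space) nn_integral_sq_loss_sq_finite:
  assumes "\<And>\<omega>. \<omega> \<in> space M \<Longrightarrow> Y \<omega> \<in> {0..1}"
  shows "(\<integral>\<^sup>+\<omega>. ennreal (\<bar>sq_loss \<theta> (Y \<omega>)\<bar>^2) \<partial>M) < \<infinity>"
proof -
  have "\<bar>sq_loss \<theta> (Y \<omega>)\<bar>^2 \<le> ((norm \<theta>^2 + 1)^2)^2" if "\<omega> \<in> space M" for \<omega>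
    using assms[OF that] sq_loss_le[of "Y \<omega>" \<theta> "norm \<theta>"]
    by (intro power_mono) (auto simp: sq_loss_def)
  then have "(\<integral>\<^sup>+\<omega>. ennreal (\<bar>sq_loss \<theta> (Y \<omega>)\<bar>^2) \<partial>M) \<le> ennreal (((norm \<theta>^2 + 1)^2)^2)"
    by (rule nn_integral_le_const)
  then show ?thesis
    unfolding infinity_ennreal_def by (rule le_less_trans[OF _ ennreal_less_top])
qed

lemma (in prob_space) SUP_nn_integral_sq_loss_grad_finite:
  assumes "\<And>\<omega>. \<omega> \<in> space M \<Longrightarrow> Y \<omega> \<in> {0..1}" "compact C" "C \<subseteq> {\<theta>. 0 < \<theta>$1}"
  shows "(SUP \<theta>\<in>C. \<integral>\<^sup>+\<omega>. ennreal (\<bar>sq_loss \<theta> (Y \<omega>)\<bar>^2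
            + norm (grad (\<lambda>v. sq_loss v (Y \<omega>)) \<theta>)^2) \<partial>M) < \<infinity>"
proof -
  obtain B where B: "\<And>\<theta>. \<theta> \<in> C \<Longrightarrow> norm \<theta> \<le> B"
    using compact_imp_bounded[OF assms(2)] bounded_iff by blast
  define K where "K = ((B^2 + 1)^2)^2 + (2 * (B^2 + 1) * B)^2"
  have "(\<integral>\<^sup>+\<omega>. ennreal (\<bar>sq_loss \<theta> (Y \<omega>)\<bar>^2 + norm (grad (\<lambda>v. sq_loss v (Y \<omega>)) \<theta>)^2) \<partial>M)
          \<le> ennreal K" if "\<theta> \<in> C" for \<theta>
    using that assms(1,3) B unfolding K_def
    by (intro nn_integral_le_const sq_loss_grad_le) auto
  then have "(SUP \<theta>\<in>C. \<integral>\<^sup>+\<omega>. ennreal (\<bar>sq_loss \<theta> (Y \<omega>)\<bar>^2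
                + norm (grad (\<lambda>v. sq_loss v (Y \<omega>)) \<theta>)^2) \<partial>M) \<le> ennreal K"
    by (rule SUP_least)
  then show ?thesis
    unfolding infinity_ennreal_def by (rule le_less_trans[OF _ ennreal_less_top])
qed

lemma C1_submanifold_hyperbola_branch: "C1_submanifold 1 {\<theta>::real^2. 0 < \<theta>$1 \<and> \<theta>$1 * \<theta>$2 = c}"
proof -
  have grad_prod: "grad (\<lambda>v::real^2. v$1 * v$2 - c) v = swap2 v" for v
    by (rule grad_eqI, rule has_derivative_comp_coord_prod[where q = "\<lambda>s. s - c", THEN has_derivative_eq_rhs])
       (auto intro!: derivative_eq_intros)
  have "Ck_on 1 {\<theta>. 0 < \<theta>$1} (\<lambda>v::real^2. v$1 * v$2 - c)"
    by (intro real_polynomial_function_Ck_on real_polynomial_function_diff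
              real_polynomial_function.intros(2-4) real_polynomial_function.intros(1)
              bounded_linear_vec_nth)
  then have "C1_submanifold (CARD(2) - 1) {\<theta> \<in> {\<theta>::real^2. 0 < \<theta>$1}. \<theta>$1 * \<theta>$2 - c = 0}"
    by (rule C1_submanifold_zero_set[OF open_half_plane]) (auto simp: grad_prod)
  then show ?thesis
    by simp
qed

lemma rank_hessian_risk:
  assumes "0 < \<theta>$1" "\<theta>$1 * \<theta>$2 = 3 * x_sin_integral"
  shows "rank (hessian risk \<theta>) = 1"
proof -
  have "swap2 \<theta> \<noteq> 0"
    using assms(1) by auto
  then show ?thesis
    unfolding hessian_risk_half_plane[OF assms] by (intro rank_outer_product) auto
qed

theorem proposition7p2:
  fixes M :: "'a measure"
    and X :: "nat \<Rightarrow> nat \<Rightarrow> 'a \<Rightarrow> real"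
    and f :: "real^2 \<Rightarrow> real"
    and F :: "real^2 \<Rightarrow> real \<Rightarrow> real"
    and \<M> :: "(real^2) set"
  assumes "prob_space M"
    and "\<And>n m. \<forall>\<omega>\<in>space M. X n m \<omega> \<in> {0..1}"
    and "prob_space.indep_vars M (\<lambda>_. borel) (\<lambda>(n, m). X n m) UNIV"
    and "\<And>n m. distributed M lborel (X n m) (\<lambda>x. indicator {0..1::real} x)"
    and f_def: "\<And>\<theta>. f \<theta> = integral {0..1} (\<lambda>x. \<bar>\<theta>$2 * max (\<theta>$1 * x) 0 - sin x\<bar>^2)"
    and F_def: "\<And>\<theta> x. F \<theta> x = \<bar>\<theta>$2 * max (\<theta>$1 * x) 0 - sin x\<bar>^2"
    and M_def: "\<M> = {\<theta>. f \<theta> = (INF v. f v)}"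
  shows
    "(\<forall>\<theta>. f \<theta> = (\<integral>\<omega>. F \<theta> (X 1 1 \<omega>) \<partial>M) \<and>
          (\<integral>\<^sup>+\<omega>. ennreal (\<bar>F \<theta> (X 1 1 \<omega>)\<bar>^2) \<partial>M) < \<infinity>) \<and>
     (\<forall>x\<in>{0..1}. \<forall>\<theta>. \<exists>r>0. \<exists>L. L-lipschitz_on (ball \<theta> r) (\<lambda>v. F v x)) \<and>
     (\<exists>U. open U \<and> Ck_on 3 U f \<and>
        (\<forall>C. C \<noteq> {} \<longrightarrow> compact C \<longrightarrow> C \<subseteq> U \<longrightarrow>
           (SUP \<theta>\<in>C. \<integral>\<^sup>+\<omega>. ennreal (\<bar>F \<theta> (X 1 1 \<omega>)\<bar>^2
                 + norm (grad (\<lambda>v. F v (X 1 1 \<omega>)) \<theta>)^2) \<partial>M) < \<infinity>) \<and>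
        \<M> \<inter> U \<noteq> {} \<and> C1_submanifold 1 (\<M> \<inter> U) \<and>
        (\<forall>\<theta>\<in>\<M> \<inter> U. rank (hessian f \<theta>) = 1))"
proof -
  \<comment> \<open>Only \<open>X 1 1\<close> enters the conclusion.\<close>
  interpret prob_space M by (rule assms(1))
  have f_risk: "f = risk"
    by (simp add: fun_eq_iff f_def risk_def sq_loss_def[abs_def] relu_net_def)
  have F_sq_loss: "F = sq_loss"
    by (simp add: fun_eq_iff F_def sq_loss_def relu_net_def)
  have X: "\<And>\<omega>. \<omega> \<in> space M \<Longrightarrow> X 1 1 \<omega> \<in> {0..1}"
    using assms(2) by blast
  define U where "U = {\<theta>::real^2. 0 < \<theta>$1}"
  have minimizers: "\<M> \<inter> U = {\<theta>. 0 < \<theta>$1 \<and> \<theta>$1 * \<theta>$2 = 3 * x_sin_integral}"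
    using relu_net_half_plane[of _ 1]
    by (auto simp: M_def U_def f_risk risk_eq_INF_iff)
  have expectation: "\<forall>\<theta>. risk \<theta> = (\<integral>\<omega>. sq_loss \<theta> (X 1 1 \<omega>) \<partial>M) \<and>
            (\<integral>\<^sup>+\<omega>. ennreal (\<bar>sq_loss \<theta> (X 1 1 \<omega>)\<bar>^2) \<partial>M) < \<infinity>"
    using integral_uniform_distributed[OF assms(4) continuous_on_sq_loss]
      nn_integral_sq_loss_sq_finite[of "X 1 1", OF X]
    by (simp add: risk_def)
  have lipschitz: "\<forall>x\<in>{0..1}. \<forall>\<theta>. \<exists>r>0. \<exists>L. L-lipschitz_on (ball \<theta> r) (\<lambda>v. sq_loss v x)"
    using bounded_imp_lipschitz_on_sq_loss[OF bounded_ball] by (intro ballI allI exI[of _ 1]) auto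
  have moments: "\<forall>C. C \<noteq> {} \<longrightarrow> compact C \<longrightarrow> C \<subseteq> U \<longrightarrow>
      (SUP \<theta>\<in>C. \<integral>\<^sup>+\<omega>. ennreal (\<bar>sq_loss \<theta> (X 1 1 \<omega>)\<bar>^2
         + norm (grad (\<lambda>v. sq_loss v (X 1 1 \<omega>)) \<theta>)^2) \<partial>M) < \<infinity>"
    using SUP_nn_integral_sq_loss_grad_finite[of "X 1 1", OF X] by (simp add: U_def)
  have open_U: "open U"
    unfolding U_def by (rule open_half_plane)
  have Ck_U: "Ck_on 3 U risk"
    unfolding U_def by (rule Ck_on_risk_half_plane)
  have submanifold: "C1_submanifold 1 (\<M> \<inter> U)"
    unfolding minimizers by (rule C1_submanifold_hyperbola_branch)
  have nonempty: "\<M> \<inter> U \<noteq> {}"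
    unfolding minimizers by (auto intro!: exI[of _ "vector [1, 3 * x_sin_integral]"])
  have rank: "\<forall>\<theta>\<in>\<M> \<inter> U. rank (hessian risk \<theta>) = 1"
    unfolding minimizers using rank_hessian_risk by blast
  show ?thesis
    unfolding f_risk F_sq_loss
    by (intro conjI exI[of _ U] expectation lipschitz moments open_U Ck_U submanifold nonempty rank)
qed

end
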